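(* Let $\zeta_n=e^{2\pi i/n}$, $F_n={\mathbf Q}(\zeta_n+\zeta_n^{-1})$ and $\underline{\mathcal O}_n={\mathbf Z}[\zeta_n+\zeta_n^{-1}]$; let $\mathfrak p_n$ be the unique prime of $\underline{\mathcal O}_n$ above $2$. (a) If $n=2^s\ge 8$, put $p_n=2+\zeta_n+\zeta_n^{-1}$. Then $\operatorname{N}_{F_n/{\mathbf Q}}(p_n)=2$ and $p_n$ is a totally positive generator of $\mathfrak p_n$. (b) If $n=3\cdot 2^s\ge 12$, put $p_n'=1+\zeta_n+\zeta_n^{-1}$. Then $\operatorname{N}_{F_n/{\mathbf Q}}(p_n')=\operatorname{N}_{F_n/{\mathbf Q}}(p_n'-2)=-2$ and $\mathfrak p_n=(p_n')$. All units of $\underline{\mathcal O}_n$ have norm $1$, and there is no element of $\underline{\mathcal O}_n$ of norm $2$. *)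

theory Defs
  imports Complex_Main "HOL-Computational_Algebra.Polynomial" "HOL-Algebra.Ideal"
begin

definition zeta :: "nat \<Rightarrow> complex" where
  "zeta n = cis (2 * pi / real n)"

definition theta :: "nat \<Rightarrow> complex" where
  "theta n = zeta n + inverse (zeta n)"

definition Ocyc :: "nat \<Rightarrow> complex set" where
  "Ocyc n = {x. \<exists>p :: int poly. x = poly (map_poly of_int p) (theta n)}"

definition Oring :: "nat \<Rightarrow> complex ring" where
  "Oring n = \<lparr>carrier = Ocyc n, mult = (*), one = 1, zero = 0, add = (+)\<rparr>"

text \<open>Index set of the real embeddings of F_n: theta_n is sent to
  zeta_n^k + zeta_n^(-k) for 0 < k < n/2 with gcd(k,n)=1.\<close>
definition emb_idx :: "nat \<Rightarrow> nat set" where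
  "emb_idx n = {k. 0 < k \<and> 2 * k < n \<and> coprime k n}"

definition conj_emb :: "nat \<Rightarrow> nat \<Rightarrow> complex \<Rightarrow> complex" where
  "conj_emb n k x =
     poly (map_poly of_int (SOME p :: int poly. x = poly (map_poly of_int p) (theta n)))
          (zeta n ^ k + inverse (zeta n ^ k))"

definition normF :: "nat \<Rightarrow> complex \<Rightarrow> complex" where
  "normF n x = (\<Prod>k\<in>emb_idx n. conj_emb n k x)"

definition totally_positive :: "nat \<Rightarrow> complex \<Rightarrow> bool" where
  "totally_positive n x \<longleftrightarrow> (\<forall>k\<in>emb_idx n. conj_emb n k x \<in> \<real> \<and> Re (conj_emb n k x) > 0)"

definition prime_above_2 :: "nat \<Rightarrow> complex set" where
  "prime_above_2 n = (THE P. primeideal P (Oring n) \<and> 2 \<in> P)"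

end

theory Submission
  imports Defs "HOL-Computational_Algebra.Polynomial_Factorial"
begin

text \<open>
  The real embeddings of \<open>F\<^sub>n\<close> send \<open>\<theta>\<^sub>n = \<zeta>\<^sub>n + \<zeta>\<^sub>n\<^sup>-\<^sup>1\<close> to \<open>\<theta>\<^sub>n\<^sub>,\<^sub>k = 2 cos (2\<pi>k/n)\<close>.
  Since \<open>\<theta>\<^sub>2\<^sub>n\<^sub>,\<^sub>k\<^sup>2 - 2 = \<theta>\<^sub>n\<^sub>,\<^sub>k\<close> and the conjugates of \<open>\<theta>\<^sub>2\<^sub>n\<close> come in pairs \<open>\<plusminus>\<theta>\<^sub>2\<^sub>n\<^sub>,\<^sub>k\<close>
  over those of \<open>\<theta>\<^sub>n\<close>, the norm of \<open>f(\<theta>\<^sub>2\<^sub>n)\<close> is the norm of \<open>g(\<theta>\<^sub>n)\<close> where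
  \<open>g(t\<^sup>2 - 2) = f(t) f(-t)\<close>. Descending to \<open>F\<^sub>8 = \<rat>(\<surd>2)\<close> resp. \<open>F\<^sub>1\<^sub>2 = \<rat>(\<surd>3)\<close> computes the
  norms of \<open>p\<^sub>n\<close>, \<open>p\<^sub>n'\<close> and \<open>p\<^sub>n' - 2\<close>, and shows that every norm has the form \<open>a\<^sup>2 - 2b\<^sup>2\<close>
  resp. \<open>a\<^sup>2 - 3b\<^sup>2\<close>; modulo 3 the latter is never \<open>-1\<close> or \<open>2\<close>.

  For these products to be norms, every integer relation of \<open>\<theta>\<^sub>n\<close> must hold for its conjugates.
  This holds because \<open>\<alpha> = \<theta>\<^sub>n\<close> resp. \<open>\<theta>\<^sub>n - 1\<close> and all its conjugates are roots of an iterate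
  \<open>E\<close> of \<open>x\<^sup>2 - 2\<close> resp. \<open>x\<^sup>2 + 2x - 2\<close>, which is Eisenstein at 2. With \<open>p = \<alpha> + 2\<close>,
  \<open>E \<equiv> x\<^sup>d\<close> mod 2 puts \<open>p\<close> in every prime above 2, and \<open>E(-2) = \<plusminus>2\<close> gives \<open>2 \<in> (p)\<close>. Since
  \<open>\<theta>\<^sub>n\<close> is an integer modulo \<open>p\<close>, \<open>O\<^sub>n/(p)\<close> has at most two elements, and \<open>N(p) = \<plusminus>2\<close>
  shows \<open>(p)\<close> is proper. Hence \<open>(p)\<close> is the unique prime above 2.
\<close>

definition ipoly :: "int poly \<Rightarrow> complex \<Rightarrow> complex" where
  "ipoly p x = poly (map_poly of_int p) x"

lemma ipoly_pCons [simp]: "ipoly (pCons a p) x = of_int a + x * ipoly p x"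
  by (simp add: ipoly_def map_poly_pCons)

lemma ipoly_0 [simp]: "ipoly 0 x = 0"
  by (simp add: ipoly_def)

lemma ipoly_1 [simp]: "ipoly 1 x = 1"
  by (simp add: ipoly_def)

lemma ipoly_add [simp]: "ipoly (p + q) x = ipoly p x + ipoly q x"
proof (induction p arbitrary: q rule: pCons_induct)
  case (pCons a p)
  then show ?case
    by (cases q rule: pCons_cases) (simp add: algebra_simps)
qed simp

lemma ipoly_uminus [simp]: "ipoly (- p) x = - ipoly p x"
  by (induction p rule: pCons_induct) (simp_all add: algebra_simps)

lemma ipoly_diff [simp]: "ipoly (p - q) x = ipoly p x - ipoly q x"
  using ipoly_add[of p "- q" x] by simp

lemma ipoly_smult [simp]: "ipoly (smult a p) x = of_int a * ipoly p x"
  by (induction p rule: pCons_induct) (simp_all add: algebra_simps)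

lemma ipoly_mult [simp]: "ipoly (p * q) x = ipoly p x * ipoly q x"
  by (induction p rule: pCons_induct) (simp_all add: algebra_simps)

lemma ipoly_pcompose [simp]: "ipoly (pcompose p q) x = ipoly p (ipoly q x)"
  by (induction p rule: pCons_induct) (simp_all add: pcompose_pCons algebra_simps)

lemma ipoly_power [simp]: "ipoly (p ^ m) x = ipoly p x ^ m"
  by (induction m) simp_all

lemma ipoly_monom [simp]: "ipoly (monom a m) x = of_int a * x ^ m"
  by (induction m) (simp_all add: monom_Suc monom_0)

lemma ipoly_of_int: "ipoly p (of_int m) = of_int (poly p m)"
  by (induction p rule: pCons_induct) simp_all

lemma ipoly_synthetic_div:
  "ipoly p x = of_int (poly p a) + (x - of_int a) * ipoly (synthetic_div p a) x"
proof -
  have "ipoly p x = ipoly ([:-a, 1:] * synthetic_div p a + [:poly p a:]) x"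
    by (simp only: synthetic_div_correct')
  then show ?thesis by (simp add: algebra_simps)
qed

lemma ipoly_even_odd_split: "\<exists>A B. \<forall>t. ipoly f t = ipoly A (t\<^sup>2) + t * ipoly B (t\<^sup>2)"
proof (induction f rule: pCons_induct)
  case (pCons a f)
  then obtain A B where "\<forall>t. ipoly f t = ipoly A (t\<^sup>2) + t * ipoly B (t\<^sup>2)" by blast
  then show ?case
    by (intro exI[of _ "pCons a B"] exI[of _ A]) (simp add: algebra_simps power2_eq_square)
qed (intro exI[of _ 0]; simp)

lemma ipoly_times_reflect: "\<exists>g. \<forall>t. ipoly f t * ipoly f (- t) = ipoly g (t\<^sup>2 - 2)"
proof -
  obtain A B where AB: "\<forall>t. ipoly f t = ipoly A (t\<^sup>2) + t * ipoly B (t\<^sup>2)"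
    using ipoly_even_odd_split by blast
  define g where "g = (pcompose A [:2, 1:])\<^sup>2 - [:2, 1:] * (pcompose B [:2, 1:])\<^sup>2"
  have "ipoly f t * ipoly f (- t) = ipoly g (t\<^sup>2 - 2)" for t
    by (simp add: AB g_def algebra_simps power2_eq_square)
  then show ?thesis by blast
qed

section \<open>The real conjugates of \<open>\<theta>\<^sub>n\<close>\<close>

definition theta_conj :: "nat \<Rightarrow> nat \<Rightarrow> complex" where
  "theta_conj n k = zeta n ^ k + inverse (zeta n ^ k)"

lemma theta_eq_theta_conj_1: "theta n = theta_conj n 1"
  by (simp add: theta_def theta_conj_def)

lemma theta_conj_eq_cos: "theta_conj n k = of_real (2 * cos (2 * pi * k / n))"
proof -
  define a where "a = real k * (2 * pi / real n)"
  have "zeta n ^ k = cis a"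
    by (simp add: zeta_def DeMoivre a_def)
  then have "theta_conj n k = cis a + cis (- a)"
    by (simp add: theta_conj_def)
  also have "\<dots> = of_real (2 * cos a)"
    by (simp add: complex_eq_iff)
  finally show ?thesis
    by (simp add: a_def algebra_simps)
qed

lemma theta_conj_double:
  assumes "n > 0"
  shows "theta_conj (2 * n) k ^ 2 - 2 = theta_conj n k"
proof -
  have double: "(2 * cos x)\<^sup>2 - 2 = 2 * cos (2 * x)" for x :: real
    by (simp add: cos_double_cos power_mult_distrib)
  have "2 * (2 * pi * k / (2 * n)) = 2 * pi * k / n"
    using assms by (simp add: field_simps)
  then have "(2 * cos (2 * pi * k / (2 * n)))\<^sup>2 - 2 = 2 * cos (2 * pi * k / n)"
    using double by metis
  then have "of_real ((2 * cos (2 * pi * k / (2 * n)))\<^sup>2 - 2)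
      = (of_real (2 * cos (2 * pi * k / n)) :: complex)"
    by simp
  then show ?thesis
    by (simp add: theta_conj_eq_cos)
qed

lemma theta_conj_reflect:
  assumes "n > 0" "k \<le> n"
  shows "theta_conj (2 * n) (n - k) = - theta_conj (2 * n) k"
proof -
  have "2 * pi * real (n - k) / real (2 * n) = pi - 2 * pi * real k / real (2 * n)"
    using assms by (simp add: of_nat_diff field_simps)
  then show ?thesis
    by (simp add: theta_conj_eq_cos)
qed

lemma theta_conj_mod:
  assumes "n > 0"
  shows "theta_conj n (k mod n) = theta_conj n k"
proof -
  have "zeta n ^ n = 1"
    using assms by (simp add: zeta_def DeMoivre)
  then have "zeta n ^ k = zeta n ^ (k mod n)"
    by (metis div_mult_mod_eq power_add power_mult power_one mult_1 mult.commute)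
  then show ?thesis
    by (simp add: theta_conj_def)
qed

lemma theta_conj_4: "coprime k (8::nat) \<Longrightarrow> theta_conj 4 k = 0"
proof -
  assume "coprime k (8::nat)"
  then have "odd k"
    using coprime_mult_right_iff[of k 2 4] by simp
  then have "k mod 4 = 1 \<or> k mod 4 = 3"
    by presburger
  moreover have "theta_conj 4 1 = 0" "theta_conj 4 3 = 0"
  proof -
    have "2 * pi * real 1 / real 4 = pi / 2" "2 * pi * real 3 / real 4 = 3 / 2 * pi"
      by simp_all
    then show "theta_conj 4 1 = 0" "theta_conj 4 3 = 0"
      by (simp_all only: theta_conj_eq_cos cos_pi_half cos_3over2_pi) simp_all
  qed
  ultimately show "theta_conj 4 k = 0"
    using theta_conj_mod[of 4 k] by auto
qed

lemma theta_conj_6: "coprime k (12::nat) \<Longrightarrow> theta_conj 6 k = 1"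
proof -
  assume "coprime k (12::nat)"
  then have "coprime k 2" "coprime k (3::nat)"
    using coprime_mult_right_iff[of k 2 6] coprime_mult_right_iff[of k 3 4] by simp_all
  then have "\<not> 2 dvd k" "\<not> 3 dvd k"
    by (auto simp: coprime_absorb_right)
  then have "k mod 6 = 1 \<or> k mod 6 = 5"
    by presburger
  moreover have "theta_conj 6 1 = 1" "theta_conj 6 5 = 1"
  proof -
    have "2 * pi * real 1 / real 6 = pi / 3" "2 * pi * real 5 / real 6 = 2 * pi - pi / 3"
      by simp_all
    then show "theta_conj 6 1 = 1" "theta_conj 6 5 = 1"
      by (simp_all only: theta_conj_eq_cos cos_60 cos_2pi_minus) simp_all
  qed
  ultimately show "theta_conj 6 k = 1"
    using theta_conj_mod[of 6 k] by auto
qed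

lemma theta_conj_8: "theta_conj 8 1 = sqrt 2" "theta_conj 8 3 = - complex_of_real (sqrt 2)"
proof -
  have "2 * pi * real 1 / real 8 = pi / 4" by simp
  then show "theta_conj 8 1 = sqrt 2"
    by (simp add: theta_conj_eq_cos cos_45)
  have "2 * pi * real 3 / real 8 = pi - pi / 4" by simp
  then have "cos (2 * pi * real 3 / real 8) = - (sqrt 2 / 2)"
    by (simp only: cos_pi_minus cos_45)
  then show "theta_conj 8 3 = - complex_of_real (sqrt 2)"
    by (simp add: theta_conj_eq_cos)
qed

lemma theta_conj_12: "theta_conj 12 1 = sqrt 3" "theta_conj 12 5 = - complex_of_real (sqrt 3)"
proof -
  have "2 * pi * real 1 / real 12 = pi / 6" by simp
  then show "theta_conj 12 1 = sqrt 3"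
    by (simp add: theta_conj_eq_cos cos_30)
  have "2 * pi * real 5 / real 12 = pi - pi / 6" by simp
  then have "cos (2 * pi * real 5 / real 12) = - (sqrt 3 / 2)"
    by (simp only: cos_pi_minus cos_30)
  then show "theta_conj 12 5 = - complex_of_real (sqrt 3)"
    by (simp add: theta_conj_eq_cos)
qed

lemma complex_sqrt_numeral_mult_self:
  "complex_of_real (sqrt (numeral m)) * complex_of_real (sqrt (numeral m)) = numeral m"
  by (simp flip: of_real_mult)

lemma totally_positive_2_plus_theta_conj:
  assumes "k \<in> emb_idx n"
  shows "2 + theta_conj n k \<in> \<real> \<and> Re (2 + theta_conj n k) > 0"
proof -
  have k: "0 < k" "real (2 * k) < real n"
    using assms by (auto simp: emb_idx_def)
  then have "2 * real k / real n < 1"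
    by (simp add: field_simps)
  then have "pi * (2 * real k / real n) < pi * 1"
    by (intro mult_strict_left_mono) auto
  moreover have "2 * pi * real k / real n = pi * (2 * real k / real n)"
    by simp
  ultimately have "2 * pi * real k / real n < pi"
    by (simp only: mult_1_right)
  then have "cos pi < cos (2 * pi * real k / real n)"
    by (intro cos_monotone_0_pi) auto
  then show ?thesis
    by (simp add: theta_conj_eq_cos)
qed

lemma finite_emb_idx [simp]: "finite (emb_idx n)"
  by (rule finite_subset[of _ "{..<n}"]) (auto simp: emb_idx_def)

lemma coprime_diff_left_nat:
  assumes "k \<le> n"
  shows "coprime (n - k) n \<longleftrightarrow> coprime k (n::nat)"
  by (smt (verit, best) assms coprime_imp_coprime dvd_add_left_iff dvd_diffD1 le_add_diff_inverse2)

lemma emb_idx_double: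
  assumes "even n" "n > 2"
  shows "emb_idx (2 * n) = emb_idx n \<union> (\<lambda>k. n - k) ` emb_idx n"
    and "emb_idx n \<inter> (\<lambda>k. n - k) ` emb_idx n = {}"
    and "inj_on (\<lambda>k. n - k) (emb_idx n)"
proof -
  have cop: "coprime k (2 * n) \<longleftrightarrow> coprime k n" for k
    using assms(1) by (auto elim!: evenE simp: coprime_mult_right_iff)
  show "emb_idx (2 * n) = emb_idx n \<union> (\<lambda>k. n - k) ` emb_idx n"
  proof (intro equalityI subsetI)
    fix k assume "k \<in> emb_idx (2 * n)"
    then have k: "0 < k" "k < n" "coprime k n"
      by (auto simp: emb_idx_def cop)
    have "2 * k \<noteq> n"
    proof
      assume "2 * k = n"
      then have "gcd k n = k"
        by (metis gcd_nat.absorb_iff1 dvd_triv_right)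
      with k(3) have "k = 1"
        by (simp add: coprime_iff_gcd_eq_1)
      with \<open>2 * k = n\<close> assms(2) show False by simp
    qed
    then have "k \<in> emb_idx n \<or> n - k \<in> emb_idx n"
      using k by (auto simp: emb_idx_def coprime_diff_left_nat)
    moreover have "k = n - (n - k)"
      using k by simp
    ultimately show "k \<in> emb_idx n \<union> (\<lambda>k. n - k) ` emb_idx n"
      by blast
  next
    fix k assume "k \<in> emb_idx n \<union> (\<lambda>k. n - k) ` emb_idx n"
    then show "k \<in> emb_idx (2 * n)"
      unfolding emb_idx_def cop by (auto simp: coprime_diff_left_nat)
  qed
  show "emb_idx n \<inter> (\<lambda>k. n - k) ` emb_idx n = {}"
    by (auto simp: emb_idx_def)
  show "inj_on (\<lambda>k. n - k) (emb_idx n)"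
    by (auto simp: emb_idx_def inj_on_def)
qed

lemma emb_idx_8: "emb_idx 8 = {1, 3}"
proof (intro equalityI subsetI)
  fix k assume "k \<in> emb_idx 8"
  then have "k = 1 \<or> k = 2 \<or> k = 3" "coprime k (8::nat)"
    by (auto simp: emb_idx_def)
  moreover have "\<not> coprime (2::nat) 8"
    by (simp add: coprime_iff_gcd_eq_1 gcd_non_0_nat)
  ultimately show "k \<in> {1, 3}"
    by auto
next
  have "coprime (1::nat) 8" "coprime (3::nat) 8"
    by (simp_all add: coprime_iff_gcd_eq_1 gcd_non_0_nat)
  then show "k \<in> emb_idx 8" if "k \<in> {1, 3}" for k
    using that by (auto simp: emb_idx_def)
qed

lemma emb_idx_12: "emb_idx 12 = {1, 5}"
proof (intro equalityI subsetI)
  fix k assume "k \<in> emb_idx 12"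
  then have "k = 1 \<or> k = 2 \<or> k = 3 \<or> k = 4 \<or> k = 5" "coprime k (12::nat)"
    by (auto simp: emb_idx_def)
  moreover have "\<not> coprime (2::nat) 12" "\<not> coprime (3::nat) 12" "\<not> coprime (4::nat) 12"
    by (simp_all add: coprime_iff_gcd_eq_1 gcd_non_0_nat)
  ultimately show "k \<in> {1, 5}"
    by auto
next
  have "coprime (1::nat) 12" "coprime (5::nat) 12"
    by (simp_all add: coprime_iff_gcd_eq_1 gcd_non_0_nat)
  then show "k \<in> emb_idx 12" if "k \<in> {1, 5}" for k
    using that by (auto simp: emb_idx_def)
qed

lemma prod_emb_idx_double:
  assumes "even n" "n > 2" "\<And>t. F t * F (- t) = G (t\<^sup>2 - 2)"
  shows "(\<Prod>k\<in>emb_idx (2 * n). F (theta_conj (2 * n) k)) = (\<Prod>k\<in>emb_idx n. G (theta_conj n k))"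
proof -
  note split = emb_idx_double[OF assms(1,2)]
  have "(\<Prod>k\<in>emb_idx (2 * n). F (theta_conj (2 * n) k))
      = (\<Prod>k\<in>emb_idx n. F (theta_conj (2 * n) k))
        * (\<Prod>k\<in>(\<lambda>k. n - k) ` emb_idx n. F (theta_conj (2 * n) k))"
    by (simp add: split(1,2) prod.union_disjoint)
  also have "(\<Prod>k\<in>(\<lambda>k. n - k) ` emb_idx n. F (theta_conj (2 * n) k))
      = (\<Prod>k\<in>emb_idx n. F (theta_conj (2 * n) (n - k)))"
    by (simp add: prod.reindex split(3))
  also have "\<dots> = (\<Prod>k\<in>emb_idx n. F (- theta_conj (2 * n) k))"
    by (rule prod.cong) (auto simp: emb_idx_def theta_conj_reflect)
  also have "(\<Prod>k\<in>emb_idx n. F (theta_conj (2 * n) k)) * \<dots>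
      = (\<Prod>k\<in>emb_idx n. G (theta_conj n k))"
    using assms by (simp add: prod.distrib [symmetric] theta_conj_double)
  finally show ?thesis .
qed

lemma prod_emb_idx_pow2_Suc:
  assumes "even n" "n > 2" "\<And>t. F t * F (- t) = G (t\<^sup>2 - 2)"
  shows "(\<Prod>k\<in>emb_idx (2 ^ Suc j * n). F (theta_conj (2 ^ Suc j * n) k))
       = (\<Prod>k\<in>emb_idx (2 ^ j * n). G (theta_conj (2 ^ j * n) k))"
proof -
  have "n \<le> 2 ^ j * n"
    by simp
  then have "even (2 ^ j * n)" "2 < 2 ^ j * n"
    using assms(1,2) by (simp, linarith)
  then show ?thesis
    using prod_emb_idx_double[of "2 ^ j * n" F G] assms(3) by (simp add: mult.assoc)
qed

lemma prod_emb_idx_pow2_8: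
  "(\<Prod>k\<in>emb_idx (2 ^ j * 8). 2 + theta_conj (2 ^ j * 8) k) = 2"
  "(\<Prod>k\<in>emb_idx (2 ^ j * 8). 2 - theta_conj (2 ^ j * 8) k) = 2"
proof (induction j)
  case 0
  show "(\<Prod>k\<in>emb_idx (2 ^ 0 * 8). 2 + theta_conj (2 ^ 0 * 8) k) = 2"
    "(\<Prod>k\<in>emb_idx (2 ^ 0 * 8). 2 - theta_conj (2 ^ 0 * 8) k) = 2"
    by (simp_all add: emb_idx_8 theta_conj_8 theta_conj_8(1)[unfolded One_nat_def] algebra_simps complex_sqrt_numeral_mult_self)
next
  case (Suc j)
  have "(\<Prod>k\<in>emb_idx (2 ^ Suc j * 8). F (theta_conj (2 ^ Suc j * 8) k))
      = (\<Prod>k\<in>emb_idx (2 ^ j * 8). 2 - theta_conj (2 ^ j * 8) k)"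
    if "F = (\<lambda>t. 2 + t) \<or> F = (\<lambda>t. 2 - t)" for F
    using that by (intro prod_emb_idx_pow2_Suc) (auto simp: algebra_simps power2_eq_square)
  then show "(\<Prod>k\<in>emb_idx (2 ^ Suc j * 8). 2 + theta_conj (2 ^ Suc j * 8) k) = 2"
    "(\<Prod>k\<in>emb_idx (2 ^ Suc j * 8). 2 - theta_conj (2 ^ Suc j * 8) k) = 2"
    using Suc.IH(2) by (metis (no_types, lifting))+
qed

lemma prod_emb_idx_pow2_12:
  "(\<Prod>k\<in>emb_idx (2 ^ j * 12). 1 + theta_conj (2 ^ j * 12) k) = -2"
  "(\<Prod>k\<in>emb_idx (2 ^ j * 12). theta_conj (2 ^ j * 12) k - 1) = -2"
  "(\<Prod>k\<in>emb_idx (2 ^ j * 12). -1 - theta_conj (2 ^ j * 12) k) = -2"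
proof (induction j)
  case 0
  show "(\<Prod>k\<in>emb_idx (2 ^ 0 * 12). 1 + theta_conj (2 ^ 0 * 12) k) = -2"
    "(\<Prod>k\<in>emb_idx (2 ^ 0 * 12). theta_conj (2 ^ 0 * 12) k - 1) = -2"
    "(\<Prod>k\<in>emb_idx (2 ^ 0 * 12). -1 - theta_conj (2 ^ 0 * 12) k) = -2"
    by (simp_all add: emb_idx_12 theta_conj_12 theta_conj_12(1)[unfolded One_nat_def] algebra_simps complex_sqrt_numeral_mult_self)
next
  case (Suc j)
  have "(\<Prod>k\<in>emb_idx (2 ^ Suc j * 12). F (theta_conj (2 ^ Suc j * 12) k))
      = (\<Prod>k\<in>emb_idx (2 ^ j * 12). -1 - theta_conj (2 ^ j * 12) k)"
    if "F = (\<lambda>t. 1 + t) \<or> F = (\<lambda>t. t - 1) \<or> F = (\<lambda>t. -1 - t)" for F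
    using that by (intro prod_emb_idx_pow2_Suc) (auto simp: algebra_simps power2_eq_square)
  then show "(\<Prod>k\<in>emb_idx (2 ^ Suc j * 12). 1 + theta_conj (2 ^ Suc j * 12) k) = -2"
    "(\<Prod>k\<in>emb_idx (2 ^ Suc j * 12). theta_conj (2 ^ Suc j * 12) k - 1) = -2"
    "(\<Prod>k\<in>emb_idx (2 ^ Suc j * 12). -1 - theta_conj (2 ^ Suc j * 12) k) = -2"
    using Suc.IH(3) by (metis (no_types, lifting))+
qed

text \<open>Once the embeddings are well defined, these products are the norms of \<open>f(\<theta>\<^sub>n)\<close>.\<close>

definition has_norm_form :: "nat \<Rightarrow> int \<Rightarrow> bool" where
  "has_norm_form n D \<longleftrightarrow>
     (\<forall>f. \<exists>a b. (\<Prod>k\<in>emb_idx n. ipoly f (theta_conj n k)) = of_int (a\<^sup>2 - D * b\<^sup>2))"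

lemma has_norm_form_pow2:
  assumes "has_norm_form n D" "even n" "n > 2"
  shows "has_norm_form (2 ^ j * n) D"
proof (induction j)
  case (Suc j)
  show ?case
    unfolding has_norm_form_def
  proof
    fix f
    obtain g where "\<forall>t. ipoly f t * ipoly f (- t) = ipoly g (t\<^sup>2 - 2)"
      using ipoly_times_reflect by blast
    then have "(\<Prod>k\<in>emb_idx (2 ^ Suc j * n). ipoly f (theta_conj (2 ^ Suc j * n) k))
        = (\<Prod>k\<in>emb_idx (2 ^ j * n). ipoly g (theta_conj (2 ^ j * n) k))"
      by (intro prod_emb_idx_pow2_Suc[OF assms(2,3)]) blast
    then show "\<exists>a b. (\<Prod>k\<in>emb_idx (2 ^ Suc j * n). ipoly f (theta_conj (2 ^ Suc j * n) k))
        = of_int (a\<^sup>2 - D * b\<^sup>2)"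
      using Suc by (simp add: has_norm_form_def)
  qed
qed (simp add: assms(1))

lemma has_norm_form_quadratic:
  assumes "emb_idx n = {k, l}" "k \<noteq> l" "theta_conj n k = r" "theta_conj n l = - r"
    and "r\<^sup>2 = of_int D"
  shows "has_norm_form n D"
  unfolding has_norm_form_def
proof
  fix f
  obtain A B where AB: "\<forall>t. ipoly f t = ipoly A (t\<^sup>2) + t * ipoly B (t\<^sup>2)"
    using ipoly_even_odd_split by blast
  have "ipoly f r * ipoly f (- r) = (ipoly A (of_int D))\<^sup>2 - r\<^sup>2 * (ipoly B (of_int D))\<^sup>2"
    using AB assms(5) by (simp add: algebra_simps power2_eq_square)
  also have "\<dots> = of_int ((poly A D)\<^sup>2 - D * (poly B D)\<^sup>2)"
    by (simp add: assms(5) ipoly_of_int)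
  finally show "\<exists>a b. (\<Prod>k\<in>emb_idx n. ipoly f (theta_conj n k)) = of_int (a\<^sup>2 - D * b\<^sup>2)"
    using assms(1-4) by auto
qed

lemma has_norm_form_8: "has_norm_form 8 2"
  by (rule has_norm_form_quadratic[OF emb_idx_8 _ theta_conj_8])
    (simp_all add: power2_eq_square complex_sqrt_numeral_mult_self)

lemma has_norm_form_12: "has_norm_form 12 3"
  by (rule has_norm_form_quadratic[OF emb_idx_12 _ theta_conj_12])
    (simp_all add: power2_eq_square complex_sqrt_numeral_mult_self)

section \<open>Eisenstein polynomials and the conjugates of \<open>\<theta>\<^sub>n\<close>\<close>

lemma least_coeff_not_dvd:
  fixes A :: "int poly"
  assumes "\<not> p dvd coeff A m"
  obtains i where "\<not> p dvd coeff A i" "\<And>k. k < i \<Longrightarrow> p dvd coeff A k" "i \<le> degree A"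
proof
  define i where "i = (LEAST i. \<not> p dvd coeff A i)"
  show i: "\<not> p dvd coeff A i"
    unfolding i_def by (rule LeastI[of _ m]) (rule assms)
  show "p dvd coeff A k" if "k < i" for k
    using not_less_Least[of k "\<lambda>i. \<not> p dvd coeff A i"] that unfolding i_def by blast
  show "i \<le> degree A"
    by (rule le_degree) (use i in auto)
qed

lemma coeff_mult_least_not_dvd:
  fixes A B :: "int poly"
  assumes "prime p"
    and "\<not> p dvd coeff A i" "\<And>k. k < i \<Longrightarrow> p dvd coeff A k"
    and "\<not> p dvd coeff B j" "\<And>k. k < j \<Longrightarrow> p dvd coeff B k"
  shows "\<not> p dvd coeff (A * B) (i + j)"
proof
  assume dvd_AB: "p dvd coeff (A * B) (i + j)"
  have "coeff (A * B) (i + j)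
      = coeff A i * coeff B j + (\<Sum>k\<in>{..i + j} - {i}. coeff A k * coeff B (i + j - k))"
    by (simp add: coeff_mult sum.remove[of _ i])
  moreover have "p dvd (\<Sum>k\<in>{..i + j} - {i}. coeff A k * coeff B (i + j - k))"
  proof (rule dvd_sum)
    fix k assume k: "k \<in> {..i + j} - {i}"
    show "p dvd coeff A k * coeff B (i + j - k)"
    proof (cases "k < i")
      case False
      with k have "i + j - k < j" by auto
      then show ?thesis using assms(5) by simp
    qed (use assms(3) in simp)
  qed
  ultimately have "p dvd coeff A i * coeff B j"
    using dvd_AB by (simp add: dvd_add_left_iff)
  with assms(1,2,4) show False
    by (simp add: prime_dvd_mult_iff)
qed

lemma degree_pos_if_not_unit:
  fixes C :: "'a::idom_divide poly"
  assumes "\<not> is_unit C" "lead_coeff C dvd 1"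
  shows "degree C > 0"
proof (rule ccontr)
  assume "\<not> degree C > 0"
  then have "C = [:lead_coeff C:]"
    using degree_0_id[of C] by simp
  with assms show False
    by (metis is_unit_const_poly_iff)
qed

lemma monic_eisenstein_irreducible:
  fixes E :: "int poly" and p :: int
  assumes "prime p" and monic: "lead_coeff E = 1" and deg: "degree E > 0"
    and dvd_coeff: "\<And>i. i < degree E \<Longrightarrow> p dvd coeff E i" and "\<not> p\<^sup>2 dvd coeff E 0"
  shows "irreducible E"
proof (rule irreducibleI)
  show E0: "E \<noteq> 0" and "\<not> is_unit E"
    using deg by (auto simp: is_unit_poly_iff)
  fix A B assume E: "E = A * B"
  show "is_unit A \<or> is_unit B"
  proof (rule ccontr)
    assume nonunits: "\<not> (is_unit A \<or> is_unit B)"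
    have lc: "lead_coeff A * lead_coeff B = 1"
      using E monic by (simp add: lead_coeff_mult)
    have "lead_coeff A dvd 1" "lead_coeff B dvd 1"
      using lc dvd_triv_left[of "lead_coeff A" "lead_coeff B"]
        dvd_triv_right[of "lead_coeff B" "lead_coeff A"] by simp_all
    then have "degree A > 0" "degree B > 0"
      using nonunits by (simp_all add: degree_pos_if_not_unit)
    have "\<not> p dvd 1"
      using assms(1) not_prime_unit by blast
    then have "\<not> p dvd lead_coeff A" "\<not> p dvd lead_coeff B"
      using lc dvd_mult2[of p "lead_coeff A" "lead_coeff B"] dvd_mult[of p "lead_coeff B" "lead_coeff A"]
      by auto
    obtain i where
      i: "\<not> p dvd coeff A i" "\<And>k. k < i \<Longrightarrow> p dvd coeff A k" "i \<le> degree A"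
      using least_coeff_not_dvd[OF \<open>\<not> p dvd lead_coeff A\<close>] by blast
    obtain j where
      j: "\<not> p dvd coeff B j" "\<And>k. k < j \<Longrightarrow> p dvd coeff B k" "j \<le> degree B"
      using least_coeff_not_dvd[OF \<open>\<not> p dvd lead_coeff B\<close>] by blast
    have "\<not> p dvd coeff E (i + j)"
      unfolding E using assms(1) i(1,2) j(1,2) by (rule coeff_mult_least_not_dvd)
    then have "\<not> i + j < degree E" "\<not> degree E < i + j"
      using dvd_coeff coeff_eq_0[of E "i + j"] by auto
    then have "i + j = degree E"
      by linarith
    moreover have "degree E = degree A + degree B"
      using E E0 by (simp add: degree_mult_eq)
    ultimately have "i = degree A" "j = degree B"
      using i(3) j(3) by linarith+
    then have "p dvd coeff A 0" "p dvd coeff B 0"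
      using i(2) j(2) \<open>degree A > 0\<close> \<open>degree B > 0\<close> by auto
    then have "p\<^sup>2 dvd coeff E 0"
      by (simp add: E coeff_mult power2_eq_square mult_dvd_mono)
    with assms(5) show False ..
  qed
qed

lemma ipoly_vanishing_divides:
  assumes "ipoly E \<alpha> = 0" "E \<noteq> 0"
  obtains m where "m \<noteq> 0" "ipoly m \<alpha> = 0"
    "\<And>h. ipoly h \<alpha> = 0 \<Longrightarrow> \<exists>a q. a \<noteq> 0 \<and> smult a h = m * q"
proof -
  define S where "S = {m. m \<noteq> 0 \<and> ipoly m \<alpha> = 0}"
  have "E \<in> S"
    using assms by (simp add: S_def)
  then obtain m where m: "m \<in> S" and minimal: "\<And>m'. m' \<in> S \<Longrightarrow> degree m \<le> degree m'"
    using ex_has_least_nat[of "\<lambda>m. m \<in> S" E degree] by blast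
  have m0: "m \<noteq> 0" and "ipoly m \<alpha> = 0"
    using m by (simp_all add: S_def)
  moreover have "\<exists>a q. a \<noteq> 0 \<and> smult a h = m * q" if h: "ipoly h \<alpha> = 0" for h
  proof -
    obtain a q where aq: "a \<noteq> 0" "smult a h = m * q + pseudo_mod h m"
      using pseudo_mod(1)[OF m0, of h] by blast
    have "ipoly (pseudo_mod h m) \<alpha> = 0"
      using arg_cong[OF aq(2), of "\<lambda>p. ipoly p \<alpha>"] h m by (simp add: S_def)
    then have "pseudo_mod h m = 0"
      using pseudo_mod(2)[OF m0, of h] minimal[of "pseudo_mod h m"] by (force simp: S_def)
    with aq show ?thesis
      by auto
  qed
  ultimately show ?thesis
    by (rule that)
qed

lemma irreducible_common_root:
  assumes irr: "irreducible E" and "ipoly E \<alpha> = 0" "ipoly E \<beta> = 0" "ipoly g \<alpha> = 0"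
  shows "ipoly g \<beta> = 0"
proof -
  have E0: "E \<noteq> 0"
    using irr by auto
  obtain m where m: "m \<noteq> 0" "ipoly m \<alpha> = 0"
    and divides: "\<And>h. ipoly h \<alpha> = 0 \<Longrightarrow> \<exists>a q. a \<noteq> 0 \<and> smult a h = m * q"
    using ipoly_vanishing_divides[OF assms(2) E0] by blast
  obtain a q where aq: "a \<noteq> 0" "smult a E = m * q"
    using divides[OF assms(2)] by blast
  have "E dvd m * q"
    unfolding aq(2)[symmetric] by (simp add: dvd_smult)
  then have "E dvd m \<or> E dvd q"
    using irreducible_imp_prime_elem[OF irr] by (simp add: prime_elem_dvd_mult_iff)
  have "ipoly m \<beta> = 0"
  proof (cases "E dvd m")
    case True
    then show ?thesis
      using assms(3) by (auto elim: dvdE)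
  next
    case False
    \<comment> \<open>then \<open>E\<close> divides \<open>q\<close>, forcing \<open>m\<close> to be a nonzero constant, impossible as \<open>m(\<alpha>) = 0\<close>\<close>
    with \<open>E dvd m \<or> E dvd q\<close> obtain h where "q = E * h"
      by (auto elim: dvdE)
    have "E * [:a:] = smult a E"
      by simp
    also have "\<dots> = E * (m * h)"
      using aq(2) \<open>q = E * h\<close> by (simp add: algebra_simps)
    finally have "[:a:] = m * h"
      using E0 mult_left_cancel by blast
    then have "degree m = 0"
      using aq(1) m(1) by (metis add_eq_0_iff_both_eq_0 degree_mult_eq degree_pCons_0 mult_zero_right pCons_eq_0_iff)
    then obtain c where "m = [:c:]"
      by (metis degree_0_id)
    with m show ?thesis
      by simp
  qed
  obtain a' q' where a': "a' \<noteq> 0" "smult a' g = m * q'"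
    using divides[OF assms(4)] by blast
  have "of_int a' * ipoly g \<beta> = 0"
    using arg_cong[OF a'(2), of "\<lambda>p. ipoly p \<beta>"] \<open>ipoly m \<beta> = 0\<close> by simp
  then show ?thesis
    using a'(1) by simp
qed

text \<open>\<open>pcompose_iter L j\<close> is the \<open>(j + 1)\<close>-fold iterate \<open>L \<circ> \<dots> \<circ> L\<close>.\<close>

fun pcompose_iter :: "int poly \<Rightarrow> nat \<Rightarrow> int poly" where
  "pcompose_iter L 0 = L"
| "pcompose_iter L (Suc j) = pcompose (pcompose_iter L j) L"

lemma power_add_smult_2: "\<exists>R. (X + smult 2 Y) ^ d = X ^ d + smult 2 (R :: int poly)"
proof (induction d)
  case (Suc d)
  then obtain R where "(X + smult 2 Y) ^ d = X ^ d + smult 2 R"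
    by blast
  then show ?case
    by (intro exI[of _ "X ^ d * Y + R * X + smult 2 (R * Y)"]) (simp add: algebra_simps smult_add_right)
qed (intro exI[of _ 0]; simp)

lemma pcompose_monom_1: "pcompose (monom 1 d) L = L ^ d"
  by (induction d) (simp_all add: monom_Suc monom_0 pcompose_pCons)

lemma pcompose_iter_mod_2:
  assumes L: "L = monom 1 2 + smult 2 l" and deg: "degree L = 2" and monic: "lead_coeff L = 1"
  shows "(\<exists>Q. pcompose_iter L j = monom 1 (2 ^ Suc j) + smult 2 Q)
    \<and> degree (pcompose_iter L j) = 2 ^ Suc j \<and> lead_coeff (pcompose_iter L j) = 1"
proof (induction j)
  case (Suc j)
  then obtain Q where Q: "pcompose_iter L j = monom 1 (2 ^ Suc j) + smult 2 Q"
    by blast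
  obtain R where R: "(monom 1 2 + smult 2 l) ^ (2 ^ Suc j) = (monom 1 2) ^ (2 ^ Suc j) + smult 2 R"
    using power_add_smult_2 by blast
  have "pcompose_iter L (Suc j) = L ^ (2 ^ Suc j) + smult 2 (pcompose Q L)"
    by (simp add: Q pcompose_add pcompose_smult pcompose_monom_1)
  also have "\<dots> = monom 1 (2 ^ Suc (Suc j)) + smult 2 (R + pcompose Q L)"
    unfolding L R by (simp add: monom_power algebra_simps smult_add_right)
  finally have "\<exists>Q. pcompose_iter L (Suc j) = monom 1 (2 ^ Suc (Suc j)) + smult 2 Q"
    by blast
  moreover have "degree (pcompose_iter L (Suc j)) = 2 ^ Suc (Suc j)"
    using Suc deg by (simp add: degree_pcompose)
  moreover have "lead_coeff (pcompose_iter L (Suc j)) = 1"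
  proof -
    have "lead_coeff (pcompose_iter L (Suc j))
        = lead_coeff (pcompose_iter L j) * lead_coeff L ^ degree (pcompose_iter L j)"
      unfolding pcompose_iter.simps by (rule lead_coeff_comp) (simp add: deg)
    moreover have "lead_coeff (pcompose_iter L j) = 1"
      using Suc by blast
    ultimately show ?thesis
      using monic by (simp only: mult_1 power_one)
  qed
  ultimately show ?case
    by blast
qed (use assms in auto)

lemma pcompose_iter_irreducible:
  assumes "L = monom 1 2 + smult 2 l" "degree L = 2" "lead_coeff L = 1"
    and "coeff (pcompose_iter L j) 0 mod 4 = 2"
  shows "irreducible (pcompose_iter L j)"
proof (rule monic_eisenstein_irreducible[where p = 2])
  obtain Q where Q: "pcompose_iter L j = monom 1 (2 ^ Suc j) + smult 2 Q"
    and deg: "degree (pcompose_iter L j) = 2 ^ Suc j"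
    and "lead_coeff (pcompose_iter L j) = 1"
    using pcompose_iter_mod_2[OF assms(1-3)] by blast
  then show "lead_coeff (pcompose_iter L j) = 1" "degree (pcompose_iter L j) > 0"
    by simp_all
  show "2 dvd coeff (pcompose_iter L j) i" if "i < degree (pcompose_iter L j)" for i
  proof -
    have "i \<noteq> 2 ^ Suc j"
      using that deg by simp
    then show ?thesis
      by (simp add: Q coeff_monom)
  qed
  show "\<not> 2\<^sup>2 dvd coeff (pcompose_iter L j) 0"
    using assms(4) by auto
qed simp

lemma poly_pcompose_iter_fixed: "poly L a = a \<Longrightarrow> poly (pcompose_iter L j) a = a"
  by (induction j) (simp_all add: poly_pcompose)

lemma ipoly_pcompose_iter_theta_conj:
  assumes L: "\<And>t. ipoly L (t + of_int c) = t\<^sup>2 - 2 + of_int c" and "n > 0"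
  shows "ipoly (pcompose_iter L j) (theta_conj (2 ^ j * (2 * n)) k + of_int c) = theta_conj n k + of_int c"
proof (induction j)
  case 0
  show ?case
    using L theta_conj_double[OF \<open>n > 0\<close>] by simp
next
  case (Suc j)
  have "0 < 2 ^ j * (2 * n)"
    using \<open>n > 0\<close> by simp
  then have "ipoly L (theta_conj (2 ^ Suc j * (2 * n)) k + of_int c)
      = theta_conj (2 ^ j * (2 * n)) k + of_int c"
    using L theta_conj_double[of "2 ^ j * (2 * n)" k] by (simp add: mult.assoc)
  then show ?case
    using Suc by simp
qed

text \<open>\<open>x\<^sup>2 - 2\<close> maps \<open>\<theta>\<^sub>2\<^sub>n\<^sub>,\<^sub>k\<close> to \<open>\<theta>\<^sub>n\<^sub>,\<^sub>k\<close>; \<open>x\<^sup>2 + 2x - 2\<close> is its conjugate by the shift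
  \<open>x \<mapsto> x - 1\<close> and maps \<open>\<theta>\<^sub>2\<^sub>n\<^sub>,\<^sub>k - 1\<close> to \<open>\<theta>\<^sub>n\<^sub>,\<^sub>k - 1\<close>.\<close>

definition doubling_poly :: "int poly" where
  "doubling_poly = [:-2, 0, 1:]"

definition shifted_doubling_poly :: "int poly" where
  "shifted_doubling_poly = [:-2, 2, 1:]"

lemma doubling_poly_mod_2:
  "doubling_poly = monom 1 2 + smult 2 [:-1:]" "degree doubling_poly = 2" "lead_coeff doubling_poly = 1"
  by (simp_all add: doubling_poly_def numeral_2_eq_2 monom_Suc monom_0)

lemma shifted_doubling_poly_mod_2:
  "shifted_doubling_poly = monom 1 2 + smult 2 [:-1, 1:]" "degree shifted_doubling_poly = 2"
  "lead_coeff shifted_doubling_poly = 1"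
  by (simp_all add: shifted_doubling_poly_def numeral_2_eq_2 monom_Suc monom_0)

lemma ipoly_doubling_poly: "ipoly doubling_poly (t + of_int 0) = t\<^sup>2 - 2 + of_int 0"
  by (simp add: doubling_poly_def power2_eq_square)

lemma ipoly_shifted_doubling_poly: "ipoly shifted_doubling_poly (t + of_int (-1)) = t\<^sup>2 - 2 + of_int (-1)"
  by (simp add: shifted_doubling_poly_def power2_eq_square algebra_simps)

lemma poly_pcompose_iter_doubling_poly:
  "poly (pcompose_iter doubling_poly j) (-2) = 2"
  "coeff (pcompose_iter doubling_poly j) 0 mod 4 = 2"
proof -
  have evals: "poly doubling_poly (-2) = 2" "poly doubling_poly 2 = 2" "poly doubling_poly 0 = -2"
    by (simp_all add: doubling_poly_def)
  show minus_2: "poly (pcompose_iter doubling_poly j) (-2) = 2" for j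
    using evals poly_pcompose_iter_fixed[of doubling_poly 2] by (cases j) (simp_all add: poly_pcompose)
  show "coeff (pcompose_iter doubling_poly j) 0 mod 4 = 2"
    using evals minus_2 by (cases j) (simp_all add: poly_0_coeff_0 [symmetric] poly_pcompose)
qed

lemma poly_pcompose_iter_shifted_doubling_poly:
  "poly (pcompose_iter shifted_doubling_poly j) (-2) = -2"
  "coeff (pcompose_iter shifted_doubling_poly j) 0 mod 4 = 2"
proof -
  have evals: "poly shifted_doubling_poly (-2) = -2" "poly shifted_doubling_poly 0 = -2"
    by (simp_all add: shifted_doubling_poly_def)
  show minus_2: "poly (pcompose_iter shifted_doubling_poly j) (-2) = -2" for j
    using evals(1) by (rule poly_pcompose_iter_fixed)
  show "coeff (pcompose_iter shifted_doubling_poly j) 0 mod 4 = 2"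
    using evals minus_2 by (cases j) (simp_all add: poly_0_coeff_0 [symmetric] poly_pcompose)
qed

text \<open>\<open>conj_emb\<close> evaluates an arbitrarily chosen representing polynomial; this property makes
  the result independent of the choice.\<close>

definition embeddings_well_defined :: "nat \<Rightarrow> bool" where
  "embeddings_well_defined n \<longleftrightarrow>
     (\<forall>k\<in>emb_idx n. \<forall>g. ipoly g (theta n) = 0 \<longrightarrow> ipoly g (theta_conj n k) = 0)"

lemma embeddings_well_defined_if_irreducible:
  assumes "irreducible E" "n > 2"
    and roots: "\<And>k. k \<in> emb_idx n \<Longrightarrow> ipoly E (theta_conj n k + of_int c) = 0"
  shows "embeddings_well_defined n"
  unfolding embeddings_well_defined_def
proof (intro ballI allI impI)
  fix k g assume k: "k \<in> emb_idx n" and g: "ipoly g (theta n) = 0"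
  define g' where "g' = pcompose g [:- c, 1:]"
  have shift: "ipoly g' (x + of_int c) = ipoly g x" for x
    by (simp add: g'_def)
  have "1 \<in> emb_idx n"
    using \<open>n > 2\<close> by (simp add: emb_idx_def)
  moreover have "ipoly g' (theta_conj n 1 + of_int c) = 0"
    using g by (simp add: shift theta_eq_theta_conj_1)
  ultimately have "ipoly g' (theta_conj n k + of_int c) = 0"
    using irreducible_common_root[OF assms(1) roots[of 1] roots[OF k]] by blast
  then show "ipoly g (theta_conj n k) = 0"
    by (simp add: shift)
qed

lemma embeddings_well_defined_pow2:
  assumes "L = monom 1 2 + smult 2 l" "degree L = 2" "lead_coeff L = 1"
    and "coeff (pcompose_iter L j) 0 mod 4 = 2"
    and L: "\<And>t. ipoly L (t + of_int c) = t\<^sup>2 - 2 + of_int c" and "n > 1"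
    and base: "\<And>k. coprime k (2 * n) \<Longrightarrow> theta_conj n k + of_int c = 0"
  shows "embeddings_well_defined (2 ^ j * (2 * n))"
proof (rule embeddings_well_defined_if_irreducible[OF pcompose_iter_irreducible[OF assms(1-4)]])
  have "2 * n \<le> 2 ^ j * (2 * n)"
    by simp
  then show "2 ^ j * (2 * n) > 2"
    using \<open>n > 1\<close> by linarith
  show "ipoly (pcompose_iter L j) (theta_conj (2 ^ j * (2 * n)) k + of_int c) = 0"
    if "k \<in> emb_idx (2 ^ j * (2 * n))" for k
    using that ipoly_pcompose_iter_theta_conj[OF L, of n j k] base \<open>n > 1\<close>
    by (simp add: emb_idx_def coprime_mult_right_iff)
qed

section \<open>The ring \<open>O\<^sub>n\<close> and the norm\<close>

lemma Oring_simps [simp]: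
  "carrier (Oring n) = Ocyc n" "x \<otimes>\<^bsub>Oring n\<^esub> y = x * y" "x \<oplus>\<^bsub>Oring n\<^esub> y = x + y"
  "\<one>\<^bsub>Oring n\<^esub> = 1" "\<zero>\<^bsub>Oring n\<^esub> = 0"
  by (simp_all add: Oring_def)

lemma Ocyc_iff: "x \<in> Ocyc n \<longleftrightarrow> (\<exists>p. x = ipoly p (theta n))"
  by (simp add: Ocyc_def ipoly_def)

lemma ipoly_theta_in_Ocyc [simp, intro]: "ipoly f (theta n) \<in> Ocyc n"
  by (auto simp: Ocyc_iff)

lemma ipoly_in_Ocyc [intro]:
  assumes "x \<in> Ocyc n"
  shows "ipoly g x \<in> Ocyc n"
proof -
  obtain f where "x = ipoly f (theta n)"
    using assms by (auto simp: Ocyc_iff)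
  then have "ipoly g x = ipoly (pcompose g f) (theta n)"
    by simp
  then show ?thesis
    by (simp only: ipoly_theta_in_Ocyc)
qed

lemma Ocyc_of_int [simp, intro]: "of_int m \<in> Ocyc n"
  using ipoly_theta_in_Ocyc[of "[:m:]" n] by simp

lemma Ocyc_numeral [simp]: "numeral m \<in> Ocyc n"
  using Ocyc_of_int[of "numeral m" n] by simp

lemma Ocyc_0 [simp]: "0 \<in> Ocyc n" and Ocyc_1 [simp]: "1 \<in> Ocyc n"
  using Ocyc_of_int[of 0 n] Ocyc_of_int[of 1 n] by simp_all

lemma theta_in_Ocyc [simp]: "theta n \<in> Ocyc n"
  using ipoly_theta_in_Ocyc[of "[:0, 1:]" n] by simp

lemma Ocyc_add [intro]: "x \<in> Ocyc n \<Longrightarrow> y \<in> Ocyc n \<Longrightarrow> x + y \<in> Ocyc n"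
  and Ocyc_mult [intro]: "x \<in> Ocyc n \<Longrightarrow> y \<in> Ocyc n \<Longrightarrow> x * y \<in> Ocyc n"
  and Ocyc_diff [intro]: "x \<in> Ocyc n \<Longrightarrow> y \<in> Ocyc n \<Longrightarrow> x - y \<in> Ocyc n"
  by (metis Ocyc_iff ipoly_add, metis Ocyc_iff ipoly_mult, metis Ocyc_iff ipoly_diff)

lemma Ocyc_uminus [intro]: "x \<in> Ocyc n \<Longrightarrow> - x \<in> Ocyc n"
  using Ocyc_diff[of 0 n x] by simp

lemma Ocyc_power [intro]: "x \<in> Ocyc n \<Longrightarrow> x ^ m \<in> Ocyc n"
  by (induction m) auto

lemma cring_Oring: "cring (Oring n)"
proof (rule cringI)
  show "abelian_group (Oring n)"
    by (rule abelian_groupI) (auto simp: algebra_simps intro!: bexI[of _ "- _"])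
  show "comm_monoid (Oring n)"
    by (rule comm_monoidI) (auto simp: algebra_simps)
qed (auto simp: algebra_simps)

lemma PIdl_Oring: "PIdl\<^bsub>Oring n\<^esub> p = {x * p | x. x \<in> Ocyc n}"
  by (simp add: cgenideal_def)

lemma ideal_Oring_closed:
  assumes "ideal P (Oring n)"
  shows ideal_Oring_add_closed: "x \<in> P \<Longrightarrow> y \<in> P \<Longrightarrow> x + y \<in> P"
    and ideal_Oring_mult_closed: "x \<in> Ocyc n \<Longrightarrow> y \<in> P \<Longrightarrow> x * y \<in> P"
  using additive_subgroup.a_closed[OF ideal.axioms(1)[OF assms], of x y]
    ideal.I_l_closed[OF assms, of y x] by simp_all

lemma conj_emb_ipoly:
  assumes "embeddings_well_defined n" "k \<in> emb_idx n"
  shows "conj_emb n k (ipoly f (theta n)) = ipoly f (theta_conj n k)"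
proof -
  define p where "p = (SOME p :: int poly. ipoly f (theta n) = poly (map_poly of_int p) (theta n))"
  have "ipoly f (theta n) = ipoly p (theta n)"
    unfolding p_def ipoly_def by (rule someI[of _ f]) simp
  then have "ipoly (p - f) (theta n) = 0"
    by simp
  then have "ipoly (p - f) (theta_conj n k) = 0"
    using assms unfolding embeddings_well_defined_def by blast
  moreover have "conj_emb n k (ipoly f (theta n)) = ipoly p (theta_conj n k)"
    unfolding conj_emb_def p_def by (simp add: ipoly_def theta_conj_def)
  ultimately show ?thesis
    by simp
qed

lemma normF_ipoly:
  assumes "embeddings_well_defined n"
  shows "normF n (ipoly f (theta n)) = (\<Prod>k\<in>emb_idx n. ipoly f (theta_conj n k))"
  unfolding normF_def using conj_emb_ipoly[OF assms] by simp

lemma normF_mult: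
  assumes "embeddings_well_defined n" "x \<in> Ocyc n" "y \<in> Ocyc n"
  shows "normF n (x * y) = normF n x * normF n y"
proof -
  obtain f g where x: "x = ipoly f (theta n)" and y: "y = ipoly g (theta n)"
    using assms(2,3) by (auto simp: Ocyc_iff)
  show ?thesis
    using normF_ipoly[OF assms(1), of "f * g"] normF_ipoly[OF assms(1), of f]
      normF_ipoly[OF assms(1), of g]
    unfolding x y by (simp add: prod.distrib)
qed

lemma normF_1:
  assumes "embeddings_well_defined n"
  shows "normF n 1 = 1"
  using normF_ipoly[OF assms, of 1] by simp

lemma normF_norm_form:
  assumes "embeddings_well_defined n" "has_norm_form n D" "x \<in> Ocyc n"
  obtains a b where "normF n x = of_int (a\<^sup>2 - D * b\<^sup>2)"
proof -
  obtain f where "x = ipoly f (theta n)"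
    using assms(3) by (auto simp: Ocyc_iff)
  moreover obtain a b where "(\<Prod>k\<in>emb_idx n. ipoly f (theta_conj n k)) = of_int (a\<^sup>2 - D * b\<^sup>2)"
    using assms(2) unfolding has_norm_form_def by blast
  ultimately show ?thesis
    using that normF_ipoly[OF assms(1), of f] by metis
qed

lemma normF_Units:
  assumes "embeddings_well_defined n" "has_norm_form n D" "u \<in> Units (Oring n)"
  obtains a b where "normF n u = of_int (a\<^sup>2 - D * b\<^sup>2)" "a\<^sup>2 - D * b\<^sup>2 = 1 \<or> a\<^sup>2 - D * b\<^sup>2 = -1"
proof -
  obtain v where uv: "u \<in> Ocyc n" "v \<in> Ocyc n" "v * u = 1"
    using assms(3) by (auto simp: Units_def)
  obtain a b where ab: "normF n u = of_int (a\<^sup>2 - D * b\<^sup>2)"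
    using normF_norm_form[OF assms(1,2) uv(1)] by blast
  obtain c e where ce: "normF n v = of_int (c\<^sup>2 - D * e\<^sup>2)"
    using normF_norm_form[OF assms(1,2) uv(2)] by blast
  have "normF n v * normF n u = 1"
    using normF_mult[OF assms(1) uv(2,1)] normF_1[OF assms(1)] uv(3) by simp
  then have "(c\<^sup>2 - D * e\<^sup>2) * (a\<^sup>2 - D * b\<^sup>2) = 1"
    unfolding ab ce by (metis of_int_eq_1_iff of_int_mult)
  then have "a\<^sup>2 - D * b\<^sup>2 = 1 \<or> a\<^sup>2 - D * b\<^sup>2 = -1"
    unfolding zmult_eq_1_iff by blast
  with ab show ?thesis
    by (rule that)
qed

lemma one_notin_PIdl_if_even_norm:
  assumes "embeddings_well_defined n" "has_norm_form n D" "p \<in> Ocyc n"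
    and "normF n p = of_int c" "even c"
  shows "1 \<notin> PIdl\<^bsub>Oring n\<^esub> p"
proof
  assume "1 \<in> PIdl\<^bsub>Oring n\<^esub> p"
  then obtain y where y: "y \<in> Ocyc n" "1 = y * p"
    by (auto simp: PIdl_Oring)
  obtain a b where ab: "normF n y = of_int (a\<^sup>2 - D * b\<^sup>2)"
    using normF_norm_form[OF assms(1,2) y(1)] by blast
  have "1 = normF n y * normF n p"
    using y normF_mult[OF assms(1) y(1) assms(3)] normF_1[OF assms(1)] by simp
  then have "(a\<^sup>2 - D * b\<^sup>2) * c = 1"
    unfolding ab assms(4) by (metis of_int_eq_1_iff of_int_mult)
  with assms(5) show False
    by (metis dvd_mult even_zero odd_one)
qed

section \<open>The prime above 2\<close>

lemma Ocyc_eq_int_mod_PIdl: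
  assumes "theta n = p + of_int c" "x \<in> Ocyc n"
  obtains a where "x - of_int a \<in> PIdl\<^bsub>Oring n\<^esub> p"
proof -
  obtain f where x: "x = ipoly f (theta n)"
    using assms(2) by (auto simp: Ocyc_iff)
  have "x - of_int (poly f c) = ipoly (synthetic_div f c) (theta n) * p"
    using ipoly_synthetic_div[of f "theta n" c] assms(1) x by (simp add: algebra_simps)
  then show ?thesis
    by (intro that[of "poly f c"]) (auto simp: PIdl_Oring)
qed

lemma two_in_PIdl_if_root:
  assumes "p \<in> Ocyc n" "ipoly E (p - 2) = 0" "poly E (-2) = 2 \<or> poly E (-2) = -2"
  shows "2 \<in> PIdl\<^bsub>Oring n\<^esub> p"
proof -
  define y where "y = ipoly (synthetic_div E (-2)) (p - 2)"
  have "y \<in> Ocyc n"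
    using assms(1) unfolding y_def by (intro ipoly_in_Ocyc Ocyc_diff) simp_all
  have "of_int (poly E (-2)) + p * y = 0"
    using ipoly_synthetic_div[of E "p - 2" "-2"] assms(2) by (simp add: y_def)
  then have "p * y = - of_int (poly E (-2))"
    by (simp add: eq_neg_iff_add_eq_0 add.commute)
  then have "2 = (- y) * p \<or> 2 = y * p"
    using assms(3) by (auto simp: mult.commute)
  moreover have "- y \<in> Ocyc n"
    using \<open>y \<in> Ocyc n\<close> by auto
  ultimately show ?thesis
    using \<open>y \<in> Ocyc n\<close> unfolding PIdl_Oring by blast
qed

lemma Ocyc_residues_mod_PIdl:
  assumes "theta n = p + of_int c" "2 \<in> PIdl\<^bsub>Oring n\<^esub> p" "x \<in> Ocyc n"
  shows "x \<in> PIdl\<^bsub>Oring n\<^esub> p \<or> x - 1 \<in> PIdl\<^bsub>Oring n\<^esub> p"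
proof -
  obtain a where "x - of_int a \<in> PIdl\<^bsub>Oring n\<^esub> p"
    using Ocyc_eq_int_mod_PIdl[OF assms(1,3)] by blast
  then obtain y z where y: "y \<in> Ocyc n" "x - of_int a = y * p" and z: "z \<in> Ocyc n" "2 = z * p"
    using assms(2) by (auto simp: PIdl_Oring)
  have "a = 2 * (a div 2) + a mod 2"
    by simp
  then have "(of_int a :: complex) = of_int (2 * (a div 2) + a mod 2)"
    by (rule arg_cong)
  then have "(of_int a :: complex) = 2 * of_int (a div 2) + of_int (a mod 2)"
    by (simp only: of_int_add of_int_mult of_int_numeral)
  then have "x - of_int (a mod 2) = (x - of_int a) + 2 * of_int (a div 2)"
    by (simp add: algebra_simps)
  also have "\<dots> = y * p + (z * p) * of_int (a div 2)"
    unfolding y(2) z(2) ..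
  also have "\<dots> = (y + z * of_int (a div 2)) * p"
    by (simp add: algebra_simps)
  finally have "x - of_int (a mod 2) = (y + z * of_int (a div 2)) * p" .
  moreover have "y + z * of_int (a div 2) \<in> Ocyc n"
    using y(1) z(1) by auto
  moreover have "a mod 2 = 0 \<or> a mod 2 = 1"
    by presburger
  ultimately show ?thesis
    by (auto simp: PIdl_Oring)
qed

lemma primeideal_PIdl_if_residues:
  assumes "p \<in> Ocyc n" "1 \<notin> PIdl\<^bsub>Oring n\<^esub> p"
    and residues: "\<And>x. x \<in> Ocyc n \<Longrightarrow> x \<in> PIdl\<^bsub>Oring n\<^esub> p \<or> x - 1 \<in> PIdl\<^bsub>Oring n\<^esub> p"
  shows "primeideal (PIdl\<^bsub>Oring n\<^esub> p) (Oring n)"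
proof (rule primeidealI)
  show "ideal (PIdl\<^bsub>Oring n\<^esub> p) (Oring n)"
    using assms(1) by (intro cring.cgenideal_ideal[OF cring_Oring]) simp
  show "cring (Oring n)"
    by (rule cring_Oring)
  show "carrier (Oring n) \<noteq> PIdl\<^bsub>Oring n\<^esub> p"
    using assms(2) by auto
  fix a b
  assume a: "a \<in> carrier (Oring n)" and b: "b \<in> carrier (Oring n)"
    and ab: "a \<otimes>\<^bsub>Oring n\<^esub> b \<in> PIdl\<^bsub>Oring n\<^esub> p"
  show "a \<in> PIdl\<^bsub>Oring n\<^esub> p \<or> b \<in> PIdl\<^bsub>Oring n\<^esub> p"
  proof (rule ccontr)
    assume "\<not> (a \<in> PIdl\<^bsub>Oring n\<^esub> p \<or> b \<in> PIdl\<^bsub>Oring n\<^esub> p)"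
    then have "a - 1 \<in> PIdl\<^bsub>Oring n\<^esub> p" "b - 1 \<in> PIdl\<^bsub>Oring n\<^esub> p"
      using residues a b by auto
    then obtain u v w where uvw: "u \<in> Ocyc n" "v \<in> Ocyc n" "w \<in> Ocyc n"
      and "a = u * p + 1" "b = v * p + 1" "a * b = w * p"
      using ab by (auto simp: PIdl_Oring diff_eq_eq)
    then have "(w - u - v - u * v * p) * p = 1"
      by (simp add: algebra_simps)
    moreover have "w - u - v - u * v * p \<in> Ocyc n"
      using uvw assms(1) by auto
    ultimately show False
      using assms(2) by (auto simp: PIdl_Oring)
  qed
qed

lemma primeideal_mem_if_root:
  assumes P: "primeideal P (Oring n)" and "2 \<in> P" "\<alpha> \<in> Ocyc n"
    and "ipoly (monom 1 d + smult 2 Q) \<alpha> = 0" "d > 0"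
  shows "\<alpha> \<in> P"
proof -
  have "\<alpha> ^ d + 2 * ipoly Q \<alpha> = 0"
    using assms(4) by simp
  then have "\<alpha> ^ d = (- ipoly Q \<alpha>) * 2"
    by (simp add: eq_neg_iff_add_eq_0 mult.commute)
  have "\<alpha> ^ d \<in> P"
    unfolding \<open>\<alpha> ^ d = (- ipoly Q \<alpha>) * 2\<close>
    by (intro ideal_Oring_mult_closed[OF primeideal.axioms(1)[OF P]] Ocyc_uminus ipoly_in_Ocyc
        assms(2,3))
  moreover have "\<alpha> ^ Suc m \<in> P \<Longrightarrow> \<alpha> \<in> P" for m
  proof (induction m)
    case (Suc m)
    then show ?case
      using primeideal.I_prime[OF P, of \<alpha> "\<alpha> ^ Suc m"] assms(3) by auto
  qed simp
  moreover obtain m where "d = Suc m"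
    using \<open>d > 0\<close> by (cases d) auto
  ultimately show ?thesis
    by blast
qed

lemma prime_above_2_eq_PIdl:
  assumes "p \<in> Ocyc n" "1 \<notin> PIdl\<^bsub>Oring n\<^esub> p" "2 \<in> PIdl\<^bsub>Oring n\<^esub> p"
    and residues: "\<And>x. x \<in> Ocyc n \<Longrightarrow> x \<in> PIdl\<^bsub>Oring n\<^esub> p \<or> x - 1 \<in> PIdl\<^bsub>Oring n\<^esub> p"
    and p_mem: "\<And>P. primeideal P (Oring n) \<Longrightarrow> 2 \<in> P \<Longrightarrow> p \<in> P"
  shows "prime_above_2 n = PIdl\<^bsub>Oring n\<^esub> p"
  unfolding prime_above_2_def
proof (rule the_equality)
  show "primeideal (PIdl\<^bsub>Oring n\<^esub> p) (Oring n) \<and> 2 \<in> PIdl\<^bsub>Oring n\<^esub> p"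
    using primeideal_PIdl_if_residues[OF assms(1,2) residues] assms(3) by blast
  fix P assume P: "primeideal P (Oring n) \<and> 2 \<in> P"
  then have idP: "ideal P (Oring n)"
    by (simp add: primeideal_def)
  have subset: "PIdl\<^bsub>Oring n\<^esub> p \<subseteq> P"
    using p_mem P ideal_Oring_mult_closed[OF idP] by (auto simp: PIdl_Oring)
  have "x \<in> PIdl\<^bsub>Oring n\<^esub> p" if "x \<in> P" for x
  proof (rule ccontr)
    assume "x \<notin> PIdl\<^bsub>Oring n\<^esub> p"
    moreover have "x \<in> Ocyc n"
      using ideal.Icarr[OF idP that] by simp
    ultimately have "x - 1 \<in> P"
      using residues subset by blast
    then have "(-1) * (x - 1) \<in> P"
      by (intro ideal_Oring_mult_closed[OF idP]) auto
    then have "x + (-1) * (x - 1) \<in> P"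
      using ideal_Oring_add_closed[OF idP] \<open>x \<in> P\<close> by blast
    then have "\<one>\<^bsub>Oring n\<^esub> \<in> P"
      by simp
    then show False
      using ideal.one_imp_carrier[OF idP] primeideal.I_notcarr[of P "Oring n"] P by simp
  qed
  with subset show "P = PIdl\<^bsub>Oring n\<^esub> p"
    by blast
qed

lemma prime_above_2_eq_PIdl_if_root:
  assumes theta: "theta n = p + of_int c"
    and E: "E = monom 1 d + smult 2 Q" "d > 0" "ipoly E (p - 2) = 0"
    and "poly E (-2) = 2 \<or> poly E (-2) = -2" and "1 \<notin> PIdl\<^bsub>Oring n\<^esub> p"
  shows "prime_above_2 n = PIdl\<^bsub>Oring n\<^esub> p"
proof -
  have p: "p \<in> Ocyc n"
    using theta theta_in_Ocyc[of n] Ocyc_diff[of "theta n" n "of_int c"] by simp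
  then have two: "2 \<in> PIdl\<^bsub>Oring n\<^esub> p"
    using E(3) assms(5) by (rule two_in_PIdl_if_root)
  show ?thesis
  proof (rule prime_above_2_eq_PIdl[OF p assms(6) two])
    show "x \<in> PIdl\<^bsub>Oring n\<^esub> p \<or> x - 1 \<in> PIdl\<^bsub>Oring n\<^esub> p" if "x \<in> Ocyc n" for x
      using Ocyc_residues_mod_PIdl[OF theta two that] .
    fix P assume P: "primeideal P (Oring n)" "2 \<in> P"
    have "p - 2 \<in> Ocyc n"
      using p by auto
    then have "p - 2 \<in> P"
      using primeideal_mem_if_root[OF P(1,2) _ E(3)[unfolded E(1)] E(2)] by blast
    then have "(p - 2) + 2 \<in> P"
      using ideal_Oring_add_closed[OF primeideal.axioms(1)[OF P(1)]] P(2) by blast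
    then show "p \<in> P"
      by simp
  qed
qed

lemma prime_above_2_eq_PIdl_pcompose_iter:
  fixes j n N :: nat
  defines "N \<equiv> 2 ^ j * (2 * n)"
  assumes L: "L = monom 1 2 + smult 2 l" "degree L = 2" "lead_coeff L = 1"
    and shift: "\<And>t. ipoly L (t + of_int c) = t\<^sup>2 - 2 + of_int c"
    and E_minus_2: "poly (pcompose_iter L j) (-2) = 2 \<or> poly (pcompose_iter L j) (-2) = -2"
    and "n > 0" "theta_conj n 1 + of_int c = 0"
    and "1 \<notin> PIdl\<^bsub>Oring N\<^esub> (ipoly [:c + 2, 1:] (theta N))"
  shows "prime_above_2 N = PIdl\<^bsub>Oring N\<^esub> (ipoly [:c + 2, 1:] (theta N))"
proof -
  obtain Q where E: "pcompose_iter L j = monom 1 (2 ^ Suc j) + smult 2 Q"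
    using pcompose_iter_mod_2[OF L, of j] by blast
  have "ipoly [:c + 2, 1:] (theta N) - 2 = theta_conj N 1 + of_int c"
    by (simp add: theta_eq_theta_conj_1)
  then have root: "ipoly (pcompose_iter L j) (ipoly [:c + 2, 1:] (theta N) - 2) = 0"
    using ipoly_pcompose_iter_theta_conj[OF shift \<open>n > 0\<close>, of j 1] assms(8)
    by (simp add: N_def add.commute)
  show ?thesis
    by (rule prime_above_2_eq_PIdl_if_root[where c = "- (c + 2)", OF _ E _ root E_minus_2 assms(9)])
      simp_all
qed

lemma sq_minus_3_sq_mod_3: "((a::int)\<^sup>2 - 3 * b\<^sup>2) mod 3 \<in> {0, 1}"
proof -
  have "a\<^sup>2 mod 3 = (a mod 3)\<^sup>2 mod 3"
    by (simp add: power_mod)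
  moreover have "a mod 3 = 0 \<or> a mod 3 = 1 \<or> a mod 3 = 2"
    by presburger
  ultimately have "a\<^sup>2 mod 3 \<in> {0, 1}"
    by auto
  then show ?thesis
    by (metis mod_diff_right_eq mod_mult_self1_is_0 diff_zero mult.commute)
qed

lemma normF_Units_eq_1:
  assumes "embeddings_well_defined n" "has_norm_form n 3" "u \<in> Units (Oring n)"
  shows "normF n u = 1"
proof -
  obtain a b where N: "normF n u = of_int (a\<^sup>2 - 3 * b\<^sup>2)"
    and "a\<^sup>2 - 3 * b\<^sup>2 = 1 \<or> a\<^sup>2 - 3 * b\<^sup>2 = -1"
    using normF_Units[OF assms] by blast
  with sq_minus_3_sq_mod_3[of a b] have "a\<^sup>2 - 3 * b\<^sup>2 = 1"
    by auto
  with N show ?thesis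
    by (metis of_int_1)
qed

lemma normF_neq_2:
  assumes "embeddings_well_defined n" "has_norm_form n 3" "x \<in> Ocyc n"
  shows "normF n x \<noteq> 2"
proof -
  obtain a b where N: "normF n x = of_int (a\<^sup>2 - 3 * b\<^sup>2)"
    using normF_norm_form[OF assms] by blast
  from sq_minus_3_sq_mod_3[of a b] have "a\<^sup>2 - 3 * b\<^sup>2 \<noteq> 2"
    by auto
  with N show ?thesis
    by (metis of_int_eq_iff of_int_numeral)
qed

lemma power2_ge_obtain:
  assumes "2 ^ m \<le> (2::nat) ^ s"
  obtains j where "2 ^ s = 2 ^ j * (2::nat) ^ m"
proof -
  have "m \<le> s"
    using assms power_increasing_iff[of 2 m s] by simp
  then obtain j where "s = m + j"
    using le_Suc_ex by blast
  then show ?thesis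
    by (intro that[of j]) (simp add: power_add mult.commute)
qed

lemma cyclotomic_pow2_case:
  assumes "2 ^ s \<ge> (8::nat)"
  shows "let n = 2 ^ s; pn = 2 + zeta n + inverse (zeta n) in
           normF n pn = 2 \<and> pn \<in> Ocyc n \<and> totally_positive n pn \<and>
           prime_above_2 n = PIdl\<^bsub>Oring n\<^esub> pn"
proof -
  obtain j where n: "(2::nat) ^ s = 2 ^ j * 8"
    using power2_ge_obtain[of 3 s] assms by auto
  define n where "n = (2::nat) ^ j * 8"
  have wd: "embeddings_well_defined n"
    unfolding n_def using embeddings_well_defined_pow2[OF doubling_poly_mod_2
        poly_pcompose_iter_doubling_poly(2) ipoly_doubling_poly, of 4] theta_conj_4 by simp
  have pn: "2 + zeta n + inverse (zeta n) = ipoly [:2, 1:] (theta n)"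
    by (simp add: theta_def)
  have norm: "normF n (ipoly [:2, 1:] (theta n)) = 2"
    using normF_ipoly[OF wd, of "[:2, 1:]"] prod_emb_idx_pow2_8(1)[of j] by (simp add: n_def)
  have "conj_emb n k (2 + theta n) = 2 + theta_conj n k" if "k \<in> emb_idx n" for k
    using conj_emb_ipoly[OF wd that, of "[:2, 1:]"] by simp
  then have tp: "totally_positive n (ipoly [:2, 1:] (theta n))"
    using totally_positive_2_plus_theta_conj by (simp add: totally_positive_def)
  have "1 \<notin> PIdl\<^bsub>Oring n\<^esub> (ipoly [:2, 1:] (theta n))"
    using has_norm_form_pow2[OF has_norm_form_8, of j] norm
    by (intro one_notin_PIdl_if_even_norm[OF wd, where D = 2 and c = 2]) (auto simp: n_def)
  then have prime: "prime_above_2 n = PIdl\<^bsub>Oring n\<^esub> (ipoly [:2, 1:] (theta n))"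
    using prime_above_2_eq_PIdl_pcompose_iter[OF doubling_poly_mod_2 ipoly_doubling_poly
        poly_pcompose_iter_doubling_poly(1)[THEN disjI1], where n = 4] theta_conj_4[of 1]
    by (simp add: n_def)
  show ?thesis
    unfolding Let_def n [folded n_def] pn using norm tp prime by blast
qed

lemma cyclotomic_three_pow2_case:
  assumes "3 * 2 ^ s \<ge> (12::nat)"
  shows "let n = 3 * 2 ^ s; pn' = 1 + zeta n + inverse (zeta n) in
           normF n pn' = -2 \<and> normF n (pn' - 2) = -2 \<and>
           prime_above_2 n = PIdl\<^bsub>Oring n\<^esub> pn' \<and>
           (\<forall>u\<in>Units (Oring n). normF n u = 1) \<and>
           \<not> (\<exists>x\<in>Ocyc n. normF n x = 2)"
proof -
  obtain j where "(2::nat) ^ s = 2 ^ j * 4"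
    using power2_ge_obtain[of 2 s] assms by auto
  then have n: "3 * (2::nat) ^ s = 2 ^ j * 12"
    by simp
  define n where "n = (2::nat) ^ j * 12"
  have wd: "embeddings_well_defined n"
    unfolding n_def using embeddings_well_defined_pow2[OF shifted_doubling_poly_mod_2
        poly_pcompose_iter_shifted_doubling_poly(2) ipoly_shifted_doubling_poly, of 6] theta_conj_6
    by simp
  have norm_form: "has_norm_form n 3"
    unfolding n_def by (rule has_norm_form_pow2[OF has_norm_form_12]) simp_all
  have pn: "1 + zeta n + inverse (zeta n) = ipoly [:1, 1:] (theta n)"
    by (simp add: theta_def)
  have norm: "normF n (ipoly [:1, 1:] (theta n)) = -2"
    using normF_ipoly[OF wd, of "[:1, 1:]"] prod_emb_idx_pow2_12(1)[of j] by (simp add: n_def)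
  have "normF n (ipoly [:-1, 1:] (theta n)) = -2"
    using normF_ipoly[OF wd, of "[:-1, 1:]"] prod_emb_idx_pow2_12(2)[of j] by (simp add: n_def)
  then have norm_minus_2: "normF n (ipoly [:1, 1:] (theta n) - 2) = -2"
    by simp
  have "1 \<notin> PIdl\<^bsub>Oring n\<^esub> (ipoly [:1, 1:] (theta n))"
    using norm by (intro one_notin_PIdl_if_even_norm[OF wd norm_form, where c = "-2"]) auto
  then have prime: "prime_above_2 n = PIdl\<^bsub>Oring n\<^esub> (ipoly [:1, 1:] (theta n))"
    using prime_above_2_eq_PIdl_pcompose_iter[OF shifted_doubling_poly_mod_2
        ipoly_shifted_doubling_poly poly_pcompose_iter_shifted_doubling_poly(1)[THEN disjI2], where n = 6]
      theta_conj_6[of 1]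
    by (simp add: n_def)
  show ?thesis
    unfolding Let_def n [folded n_def] pn
    using norm norm_minus_2 prime normF_Units_eq_1[OF wd norm_form] normF_neq_2[OF wd norm_form]
    by blast
qed

theorem proposition3p12:
  shows "(\<forall>s::nat. 2 ^ s \<ge> (8::nat) \<longrightarrow>
           (let n = 2 ^ s; pn = 2 + zeta n + inverse (zeta n) in
              normF n pn = 2 \<and> pn \<in> Ocyc n \<and> totally_positive n pn \<and>
              prime_above_2 n = PIdl\<^bsub>Oring n\<^esub> pn))
       \<and> (\<forall>s::nat. 3 * 2 ^ s \<ge> (12::nat) \<longrightarrow>
           (let n = 3 * 2 ^ s; pn' = 1 + zeta n + inverse (zeta n) in
              normF n pn' = -2 \<and> normF n (pn' - 2) = -2 \<and>
              prime_above_2 n = PIdl\<^bsub>Oring n\<^esub> pn' \<and>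
              (\<forall>u\<in>Units (Oring n). normF n u = 1) \<and>
              \<not> (\<exists>x\<in>Ocyc n. normF n x = 2)))"
  using cyclotomic_pow2_case cyclotomic_three_pow2_case by blast

end
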